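(* Let $n\ge2$ and $0\le k\le n$. For every $1\le i\le n$ such that it is not the case that $k=n$ and $i\in\{n-1,n\}$, the nerve of the category $\pi^{-1}(i)\cap V_+\pi^{-1}(\{0,\dots,i-1\})$ is weakly contractible.
   Context: $c\mathrm{Sd}^2\Lambda^k[n]$ denotes the poset whose objects are strictly increasing chains $A_0\subsetneq\dots\subsetneq A_m$ ($m\ge0$) of non-empty subsets of $[n]=\{0,\dots,n\}$ with $A_m\ne[n]$ and $A_m\ne[n]\setminus\{k\}$, ordered by $B_\bullet\le A_\bullet$ iff each $B_j$ occurs among the $A_i$. $\pi$ sends $A_\bullet$ to $\min A_0$; for $S\subseteq[n]$, $\pi^{-1}(S)$ is the full subposet of chains with $\min A_0\in S$, and $\pi^{-1}(i)=\pi^{-1}(\{i\})$. For a full subposet $\mathcal{C}$, $V_+\mathcal{C}$ is the full subposet of all $d\in c\mathrm{Sd}^2\Lambda^k[n]$ such that $c\le d$ for some $c\in\mathcal{C}$. *)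

theory Defs
  imports "HOL-Analysis.Analysis"
begin

text \<open>This says all homotopy groups vanish at all basepoints and the space is path connected.\<close>
definition weakly_contractible :: "'a topology \<Rightarrow> bool" where
  "weakly_contractible X \<longleftrightarrow> topspace X \<noteq> {} \<and>
     (\<forall>m f. continuous_map (nsphere m) X f \<longrightarrow>
        (\<exists>c\<in>topspace X. homotopic_with (\<lambda>_. True) (nsphere m) X f (\<lambda>_. c)))"

text \<open>Geometric realization of the nerve (order complex) of a poset P ordered by inclusion:
points are barycentric coordinate functions supported on a nonempty chain of P,
as a subspace of the product topology on functions 'a \<Rightarrow> real.\<close>
definition nerve_realization :: "'a set set \<Rightarrow> ('a set \<Rightarrow> real) topology" where
  "nerve_realization P = subtopology (powertop_real UNIV)
     {x. (\<forall>c. 0 \<le> x c) \<and> (\<forall>c. c \<notin> P \<longrightarrow> x c = 0) \<and> finite {c. x c \<noteq> 0} \<and>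
         (\<Sum>c\<in>{c. x c \<noteq> 0}. x c) = 1 \<and>
         (\<forall>c\<in>{c. x c \<noteq> 0}. \<forall>d\<in>{c. x c \<noteq> 0}. c \<subseteq> d \<or> d \<subseteq> c)}"

text \<open>Objects of cSd^2 Lambda^k[n]: a strictly increasing chain A_0 < ... < A_m of nonempty
subsets of [n] = {0..n} is represented by its (nonempty, finite) set of members; its top
A_m is the union and its bottom A_0 the intersection. The order B \<le> A (each B_j occurs
among the A_i) is then inclusion of these sets.\<close>
definition cSd2 :: "nat \<Rightarrow> nat \<Rightarrow> nat set set set" where
  "cSd2 n k = {C. C \<noteq> {} \<and> (\<forall>A\<in>C. A \<noteq> {} \<and> A \<subseteq> {0..n}) \<and>
                   (\<forall>A\<in>C. \<forall>B\<in>C. A \<subseteq> B \<or> B \<subseteq> A) \<and>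
                   \<Union>C \<noteq> {0..n} \<and> \<Union>C \<noteq> {0..n} - {k}}"

definition piSd :: "nat set set \<Rightarrow> nat" where
  "piSd C = Min (\<Inter>C)"

definition preimSd :: "nat \<Rightarrow> nat \<Rightarrow> nat set \<Rightarrow> nat set set set" where
  "preimSd n k S = {C \<in> cSd2 n k. piSd C \<in> S}"

definition Vplus :: "nat \<Rightarrow> nat \<Rightarrow> nat set set set \<Rightarrow> nat set set set" where
  "Vplus n k \<C> = {d \<in> cSd2 n k. \<exists>c\<in>\<C>. c \<subseteq> d}"

end

theory Submission
  imports Defs
begin

text \<open>
  Chains in \<open>\<pi>\<^sup>-\<^sup>1(i) \<inter> V\<^sub>+\<pi>\<^sup>-\<^sup>1({0..<i})\<close> are exactly the chains of subsets of \<open>[n]\<close> that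
  contain \<open>i\<close> (other than \<open>[n]\<close> and \<open>[n] - {k}\<close>), whose bottom lies in \<open>{i..n}\<close> and which reach below
  \<open>i\<close>. Two monotone self-maps \<open>\<phi> \<le> \<psi>\<close> of such subsets that respect these two conditions induce
  homotopic maps \<open>C \<mapsto> \<phi> ` C\<close>, \<open>C \<mapsto> \<psi> ` C\<close> of the nerve: splicing \<open>\<phi>\<close> below a cardinality
  threshold with \<open>\<psi>\<close> above it gives a zig-zag of comparable poset maps, and comparable poset maps
  are homotopic. The zig-zag
  \<open>A \<le> A \<union> {k} \<ge> {k} \<union> (A \<inter> {0..i}) \<lessgtr> Y\<close> (each applied only when \<open>A\<close> reaches below \<open>i\<close>,
  otherwise \<open>A \<mapsto> {i}\<close>) connects the identity with a map whose image is the single chain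
  \<open>{{i}, Y}\<close>, so the nerve is contractible. The excluded cases \<open>k = n\<close>, \<open>i \<in> {n - 1, n}\<close> are exactly
  those in which the truncation \<open>{k} \<union> (A \<inter> {0..i})\<close> can become \<open>[n]\<close>.
\<close>

section \<open>Realizations of nerves of posets of sets\<close>

definition nerve_points :: "'a set set \<Rightarrow> ('a set \<Rightarrow> real) set" where
  "nerve_points P = {x. (\<forall>c. 0 \<le> x c) \<and> (\<forall>c. c \<notin> P \<longrightarrow> x c = 0) \<and> finite {c. x c \<noteq> 0} \<and>
         (\<Sum>c\<in>{c. x c \<noteq> 0}. x c) = 1 \<and>
         (\<forall>c\<in>{c. x c \<noteq> 0}. \<forall>d\<in>{c. x c \<noteq> 0}. c \<subseteq> d \<or> d \<subseteq> c)}"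

lemma nerve_realization_eq:
  "nerve_realization P = subtopology (powertop_real UNIV) (nerve_points P)"
  unfolding nerve_realization_def nerve_points_def by simp

lemma topspace_nerve_realization: "topspace (nerve_realization P) = nerve_points P"
  unfolding nerve_realization_eq by simp

lemma nerve_points_sum:
  assumes "x \<in> nerve_points P" "finite P"
  shows "(\<Sum>c\<in>P. x c) = 1"
proof -
  have "{c. x c \<noteq> 0} \<subseteq> P" using assms(1) by (auto simp: nerve_points_def)
  then have "(\<Sum>c\<in>P. x c) = (\<Sum>c\<in>{c. x c \<noteq> 0}. x c)"
    by (intro sum.mono_neutral_right[OF assms(2)]) auto
  then show ?thesis using assms(1) by (simp add: nerve_points_def)
qed

definition nerve_map :: "'a set set \<Rightarrow> ('a set \<Rightarrow> 'b set) \<Rightarrow> ('a set \<Rightarrow> real) \<Rightarrow> 'b set \<Rightarrow> real" where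
  "nerve_map P f x = (\<lambda>E. \<Sum>C\<in>{C\<in>P. f C = E}. x C)"

lemma nerve_map_cong: "(\<And>C. C \<in> P \<Longrightarrow> f C = g C) \<Longrightarrow> nerve_map P f = nerve_map P g"
  unfolding nerve_map_def by (intro ext sum.cong) auto

lemma nerve_map_id:
  assumes "x \<in> nerve_points P"
  shows "nerve_map P (\<lambda>C. C) x = x"
proof
  fix E
  show "nerve_map P (\<lambda>C. C) x E = x E"
  proof (cases "E \<in> P")
    case True
    then have "{C \<in> P. C = E} = {E}" by auto
    then show ?thesis by (simp add: nerve_map_def)
  next
    case False
    then show ?thesis using assms by (simp add: nerve_map_def nerve_points_def)
  qed
qed

lemma nerve_map_const:
  assumes "x \<in> nerve_points P" "finite P"
  shows "nerve_map P (\<lambda>_. C0) x = (\<lambda>E. if E = C0 then 1 else 0)"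
  using nerve_points_sum[OF assms] by (auto simp: nerve_map_def)

text \<open>At time \<open>t\<close>, the part of the mass of \<open>x\<close> lying within \<open>t\<close> of the top of its chain has
  been moved from \<open>f C\<close> to \<open>g C\<close>. Moved vertices lie above unmoved ones, so with \<open>f \<le> g\<close> the
  support stays a chain.\<close>
definition mass_moved :: "'a set set \<Rightarrow> real \<Rightarrow> ('a set \<Rightarrow> real) \<Rightarrow> 'a set \<Rightarrow> real" where
  "mass_moved P t x C = min (x C) (max 0 (t - (\<Sum>D\<in>{D\<in>P. C \<subset> D}. x D)))"

definition nerve_homotopy ::
    "'a set set \<Rightarrow> ('a set \<Rightarrow> 'a set) \<Rightarrow> ('a set \<Rightarrow> 'a set) \<Rightarrow> real \<times> ('a set \<Rightarrow> real) \<Rightarrow> 'a set \<Rightarrow> real" where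
  "nerve_homotopy P f g = (\<lambda>(t, x) E. (\<Sum>C\<in>{C\<in>P. g C = E}. mass_moved P t x C) +
                                       (\<Sum>C\<in>{C\<in>P. f C = E}. x C - mass_moved P t x C))"

lemma mass_moved_bounds:
  assumes "x \<in> nerve_points P"
  shows "0 \<le> mass_moved P t x C" "mass_moved P t x C \<le> x C"
  using assms by (auto simp: mass_moved_def nerve_points_def)

lemma nerve_homotopy_0:
  assumes "x \<in> nerve_points P"
  shows "nerve_homotopy P f g (0, x) = nerve_map P f x"
proof -
  have "mass_moved P 0 x C = 0" for C
  proof -
    have "0 \<le> (\<Sum>D\<in>{D\<in>P. C \<subset> D}. x D)"
      using assms by (intro sum_nonneg) (auto simp: nerve_points_def)
    then show ?thesis using assms by (auto simp: mass_moved_def nerve_points_def)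
  qed
  then show ?thesis by (simp add: nerve_homotopy_def nerve_map_def)
qed

lemma nerve_homotopy_1:
  assumes "x \<in> nerve_points P" "finite P"
  shows "nerve_homotopy P f g (1, x) = nerve_map P g x"
proof -
  have "mass_moved P 1 x C = x C" if "C \<in> P" for C
  proof -
    have "x C + (\<Sum>D\<in>{D\<in>P. C \<subset> D}. x D) = (\<Sum>D\<in>insert C {D\<in>P. C \<subset> D}. x D)"
      using assms(2) by (subst sum.insert) auto
    also have "\<dots> \<le> (\<Sum>D\<in>P. x D)"
      using assms that by (intro sum_mono2) (auto simp: nerve_points_def)
    finally show ?thesis
      using nerve_points_sum[OF assms] assms(1) by (auto simp: mass_moved_def nerve_points_def)
  qed
  then show ?thesis by (simp add: nerve_homotopy_def nerve_map_def)
qed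

lemma continuous_map_nerve_homotopy:
  assumes "finite P"
  shows "continuous_map (prod_topology (top_of_set {0..1}) (nerve_realization P)) (powertop_real UNIV)
           (nerve_homotopy P f g)"
proof -
  let ?T = "prod_topology (top_of_set {0..1}) (nerve_realization P)"
  have coord: "continuous_map ?T euclideanreal (\<lambda>tx. snd tx C)" for C
    unfolding nerve_realization_eq
    by (intro continuous_map_compose[OF continuous_map_snd, unfolded o_def] continuous_intros) auto
  have time: "continuous_map ?T euclideanreal fst"
    by (intro continuous_map_compose[OF continuous_map_fst, unfolded o_def] continuous_intros) auto
  have "continuous_map ?T euclideanreal (\<lambda>tx. mass_moved P (fst tx) (snd tx) C)" for C
    unfolding mass_moved_def
    by (intro continuous_intros coord time finite_subset[OF _ assms]) auto
  then show ?thesis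
    unfolding continuous_map_componentwise_UNIV nerve_homotopy_def case_prod_beta
    by (intro allI continuous_intros coord finite_subset[OF _ assms]) auto
qed

lemma mass_moved_below_unmoved:
  assumes x: "x \<in> nerve_points P" and "finite P" "C \<in> P" "C' \<in> P"
    and moved: "mass_moved P t x C \<noteq> 0" and unmoved: "x C' - mass_moved P t x C' \<noteq> 0"
  shows "C' \<subseteq> C"
proof -
  have "x C \<noteq> 0" "x C' \<noteq> 0"
    using moved unmoved mass_moved_bounds[OF x] by (metis antisym diff_self)+
  then have "C \<subseteq> C' \<or> C' \<subseteq> C" using x by (auto simp: nerve_points_def)
  moreover have "\<not> C \<subset> C'"
  proof
    assume "C \<subset> C'"
    have "x C' + (\<Sum>D\<in>{D\<in>P. C' \<subset> D}. x D) = (\<Sum>D\<in>insert C' {D\<in>P. C' \<subset> D}. x D)"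
      using assms(2) by (subst sum.insert) auto
    also have "\<dots> \<le> (\<Sum>D\<in>{D\<in>P. C \<subset> D}. x D)"
      using assms(2,4) x \<open>C \<subset> C'\<close> by (intro sum_mono2) (auto simp: nerve_points_def)
    finally show False
      using moved unmoved mass_moved_bounds[OF x, of t C] by (auto simp: mass_moved_def)
  qed
  ultimately show ?thesis by blast
qed

lemma nerve_homotopy_support:
  assumes "nerve_homotopy P f g (t, x) E \<noteq> 0"
  shows "(\<exists>C\<in>P. g C = E \<and> mass_moved P t x C \<noteq> 0) \<or> (\<exists>C\<in>P. f C = E \<and> x C - mass_moved P t x C \<noteq> 0)"
  using assms sum.neutral[of "{C\<in>P. g C = E}" "mass_moved P t x"]
    sum.neutral[of "{C\<in>P. f C = E}" "\<lambda>C. x C - mass_moved P t x C"]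
  by (fastforce simp: nerve_homotopy_def)

lemma nerve_homotopy_in_nerve_points:
  assumes finP: "finite P" and x: "x \<in> nerve_points P"
    and fP: "f ` P \<subseteq> P" and gP: "g ` P \<subseteq> P" and fg: "\<And>C. C \<in> P \<Longrightarrow> f C \<subseteq> g C"
    and monf: "mono_on P f" and mong: "mono_on P g"
  shows "nerve_homotopy P f g (t, x) \<in> nerve_points P"
proof -
  let ?m = "mass_moved P t x" and ?h = "nerve_homotopy P f g (t, x)"
  have h: "?h E = (\<Sum>C\<in>{C\<in>P. g C = E}. ?m C) + (\<Sum>C\<in>{C\<in>P. f C = E}. x C - ?m C)" for E
    by (simp add: nerve_homotopy_def)
  have nonneg: "0 \<le> ?h E" for E
    unfolding h using mass_moved_bounds[OF x] by (intro add_nonneg_nonneg sum_nonneg) auto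
  have supp: "{E. ?h E \<noteq> 0} \<subseteq> P"
    using nerve_homotopy_support fP gP by blast
  have "(\<Sum>E\<in>P. ?h E) = (\<Sum>C\<in>P. ?m C) + (\<Sum>C\<in>P. x C - ?m C)"
    unfolding h sum.distrib
    using sum.group[OF finP finP, of g ?m] sum.group[OF finP finP, of f "\<lambda>C. x C - ?m C"] fP gP
    by simp
  also have "\<dots> = 1"
    using nerve_points_sum[OF x finP] by (simp add: sum_subtractf)
  finally have sum1: "(\<Sum>E\<in>{E. ?h E \<noteq> 0}. ?h E) = 1"
    using sum.mono_neutral_left[OF finP supp, of ?h] by simp
  have chain: "E \<subseteq> E' \<or> E' \<subseteq> E" if "?h E \<noteq> 0" "?h E' \<noteq> 0" for E E'
  proof -
    have cmp: "C \<subseteq> C' \<or> C' \<subseteq> C" if "C \<in> P" "C' \<in> P" "x C \<noteq> 0" "x C' \<noteq> 0" for C C'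
      using x that by (auto simp: nerve_points_def)
    have nz: "x C \<noteq> 0" if "?m C \<noteq> 0 \<or> x C - ?m C \<noteq> 0" for C
      using that mass_moved_bounds[OF x, of t C] by linarith
    have cross: "f C' \<subseteq> g C" if "C \<in> P" "C' \<in> P" "?m C \<noteq> 0" "x C' - ?m C' \<noteq> 0" for C C'
      using mass_moved_below_unmoved[OF x finP that] monf fg that by (meson mono_onD order_trans)
    from nerve_homotopy_support[OF that(1)] nerve_homotopy_support[OF that(2)] show ?thesis
      using cmp nz cross monf mong by (elim disjE bexE conjE) (metis mono_onD)+
  qed
  show ?thesis
    unfolding nerve_points_def
    using nonneg supp sum1 chain finite_subset[OF supp finP] by auto
qed

lemma homotopic_nerve_maps:
  assumes "finite P" and "f ` P \<subseteq> P" "g ` P \<subseteq> P" "\<And>C. C \<in> P \<Longrightarrow> f C \<subseteq> g C"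
    and "mono_on P f" "mono_on P g"
  shows "homotopic_with (\<lambda>_. True) (nerve_realization P) (nerve_realization P) (nerve_map P f) (nerve_map P g)"
proof -
  have "continuous_map (prod_topology (top_of_set {0..1}) (nerve_realization P)) (nerve_realization P)
          (nerve_homotopy P f g)"
    using continuous_map_nerve_homotopy[OF assms(1)] nerve_homotopy_in_nerve_points[OF assms(1) _ assms(2-)]
    by (auto simp: continuous_map_in_subtopology nerve_realization_eq[of P] topspace_nerve_realization)
  then show ?thesis
    using nerve_homotopy_0 nerve_homotopy_1 assms(1)
    by (subst homotopic_with) (auto intro!: exI[of _ "nerve_homotopy P f g"] simp: topspace_nerve_realization)
qed

lemma weakly_contractible_if_contractible_space:
  assumes "contractible_space X" "topspace X \<noteq> {}"
  shows "weakly_contractible X"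
  unfolding weakly_contractible_def
proof (intro conjI allI impI)
  fix m f assume f: "continuous_map (nsphere m) X f"
  obtain a where a: "a \<in> topspace X" using assms(2) by blast
  then have nullhomotopic: "homotopic_with (\<lambda>_. True) X X id (\<lambda>_. a)"
    using assms(1) contractible_space_alt by metis
  have "homotopic_with (\<lambda>_. True) (nsphere m) X (id \<circ> f) ((\<lambda>_. a) \<circ> f)"
    by (rule homotopic_with_compose_continuous_map_right[OF nullhomotopic f]) simp
  then show "\<exists>c\<in>topspace X. homotopic_with (\<lambda>_. True) (nsphere m) X f (\<lambda>_. c)"
    using a by auto
qed (fact assms(2))

lemma weakly_contractible_nerve_realization:
  assumes "finite P" "C0 \<in> P"
    and "homotopic_with (\<lambda>_. True) (nerve_realization P) (nerve_realization P)
           (nerve_map P (\<lambda>C. C)) (nerve_map P (\<lambda>_. C0))"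
  shows "weakly_contractible (nerve_realization P)"
proof -
  let ?X = "nerve_realization P" and ?v = "\<lambda>E. if E = C0 then 1 else 0 :: real"
  have v: "?v \<in> topspace ?X"
  proof -
    have "{E. ?v E \<noteq> 0} = {C0}" by auto
    then show ?thesis using assms(2) by (auto simp: topspace_nerve_realization nerve_points_def)
  qed
  have "homotopic_with (\<lambda>_. True) ?X ?X id (\<lambda>_. ?v)"
  proof (rule homotopic_with_eq[OF assms(3)])
    show "id x = nerve_map P (\<lambda>C. C) x" "?v = nerve_map P (\<lambda>_. C0) x"
      if "x \<in> topspace ?X" for x
      using that nerve_map_id[symmetric] nerve_map_const[OF _ assms(1), symmetric]
      by (simp_all add: topspace_nerve_realization)
  qed simp
  then have "contractible_space ?X" by (auto simp: contractible_space_def)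
  then show ?thesis using v weakly_contractible_if_contractible_space by blast
qed

section \<open>Maps of chains induced by comparable maps of elements\<close>

definition splice_image :: "('a set \<Rightarrow> 'b) \<Rightarrow> ('a set \<Rightarrow> 'b) \<Rightarrow> nat \<Rightarrow> nat \<Rightarrow> 'a set set \<Rightarrow> 'b set" where
  "splice_image f g a b C = f ` {A\<in>C. card A < a} \<union> g ` {A\<in>C. b \<le> card A}"

text \<open>The chain maps \<open>splice_image f g m m\<close> (equal to \<open>f ` C\<close> for large \<open>m\<close> and to \<open>g ` C\<close> for
  \<open>m = 0\<close>) and \<open>splice_image f g (Suc m) m\<close> form a zig-zag of inclusions, so \<open>f ` C\<close> and \<open>g ` C\<close>
  induce homotopic maps although they are not comparable.\<close>
lemma homotopic_nerve_maps_image: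
  assumes finP: "finite P" and bounded: "\<And>C A. C \<in> P \<Longrightarrow> A \<in> C \<Longrightarrow> card A \<le> N"
    and closed: "\<And>C a b. C \<in> P \<Longrightarrow> b \<le> a \<Longrightarrow> a \<le> Suc b \<Longrightarrow> splice_image f g a b C \<in> P"
  shows "homotopic_with (\<lambda>_. True) (nerve_realization P) (nerve_realization P)
           (nerve_map P (\<lambda>C. f ` C)) (nerve_map P (\<lambda>C. g ` C))"
proof -
  let ?X = "nerve_realization P" and ?S = "\<lambda>a b. nerve_map P (splice_image f g a b)"
  have mono: "mono_on P (splice_image f g a b)" for a b
    by (auto simp: mono_on_def splice_image_def)
  have closed': "splice_image f g a b ` P \<subseteq> P" if "b \<le> a" "a \<le> Suc b" for a b
    using closed that by blast
  have grow: "splice_image f g a b C \<subseteq> splice_image f g a' b' C" if "a \<le> a'" "b' \<le> b" for a b a' b' C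
    using that by (auto simp: splice_image_def)
  have step: "homotopic_with (\<lambda>_. True) ?X ?X (?S (Suc m) (Suc m)) (?S m m)" for m
  proof -
    have "homotopic_with (\<lambda>_. True) ?X ?X (?S (Suc m) (Suc m)) (?S (Suc m) m)"
      by (rule homotopic_nerve_maps[OF finP closed' closed' grow mono mono]) simp_all
    moreover have "homotopic_with (\<lambda>_. True) ?X ?X (?S m m) (?S (Suc m) m)"
      by (rule homotopic_nerve_maps[OF finP closed' closed' grow mono mono]) simp_all
    ultimately show ?thesis by (metis homotopic_with_symD homotopic_with_trans)
  qed
  have "homotopic_with (\<lambda>_. True) ?X ?X (?S (Suc m) (Suc m)) (?S 0 0)" for m
  proof (induction m)
    case (Suc m)
    then show ?case using step homotopic_with_trans by blast
  qed (rule step)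
  moreover have "?S (Suc N) (Suc N) = nerve_map P (\<lambda>C. f ` C)"
    using bounded by (intro nerve_map_cong) (force simp: splice_image_def)
  moreover have "?S 0 0 = nerve_map P (\<lambda>C. g ` C)"
    by (intro nerve_map_cong) (simp add: splice_image_def)
  ultimately show ?thesis by metis
qed

lemma splice_subset_chain:
  assumes maps: "f ` W \<subseteq> W" "g ` W \<subseteq> W" and mono: "mono_on W f" "mono_on W g"
    and le: "\<And>A. A \<in> W \<Longrightarrow> f A \<subseteq> g A" and fin: "\<And>A. A \<in> W \<Longrightarrow> finite A"
    and C: "subset.chain W C" and ab: "b \<le> a" "a \<le> Suc b"
  shows "subset.chain W (splice_image f g a b C)"
proof -
  have CW: "C \<subseteq> W" and cmp: "\<And>A B. A \<in> C \<Longrightarrow> B \<in> C \<Longrightarrow> A \<subseteq> B \<or> B \<subseteq> A"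
    using C by (auto simp: subset_chain_def)
  have cross: "f A \<subseteq> g B" if "A \<in> C" "B \<in> C" "card A < a" "b \<le> card B" for A B
    using cmp[OF that(1,2)]
  proof
    assume "A \<subseteq> B"
    then show ?thesis using CW that mono_onD[OF mono(1)] le by blast
  next
    assume BA: "B \<subseteq> A"
    have "finite A" using CW that(1) fin by blast
    moreover have "card A \<le> card B" using that(3,4) ab by linarith
    ultimately have "B = A" using BA card_mono card_subset_eq le_antisym by metis
    then show ?thesis using CW that le by blast
  qed
  have mono_f: "f A \<subseteq> f B" and mono_g: "g A \<subseteq> g B" if "A \<in> C" "B \<in> C" "A \<subseteq> B" for A B
    using mono_onD[OF mono(1)] mono_onD[OF mono(2)] CW that by blast+
  have "X \<subseteq> Y \<or> Y \<subseteq> X" if "X \<in> splice_image f g a b C" "Y \<in> splice_image f g a b C" for X Y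
    using that unfolding splice_image_def
    by (elim UnE imageE CollectE conjE) (metis cmp mono_f mono_g cross)+
  moreover have "splice_image f g a b C \<subseteq> W"
    using CW maps by (auto simp: splice_image_def)
  ultimately show ?thesis by (simp add: subset_chain_def)
qed

lemma splice_member:
  assumes "A \<in> C" "b \<le> a"
  obtains "f A \<in> splice_image f g a b C" | "g A \<in> splice_image f g a b C"
  using assms by (cases "card A < a") (auto simp: splice_image_def)

section \<open>The poset of chains\<close>

definition admissible_sets :: "nat \<Rightarrow> nat \<Rightarrow> nat \<Rightarrow> nat set set" where
  "admissible_sets n k i = {A. A \<subseteq> {0..n} \<and> i \<in> A \<and> A \<noteq> {0..n} \<and> A \<noteq> {0..n} - {k}}"

definition admissible_chains :: "nat \<Rightarrow> nat \<Rightarrow> nat \<Rightarrow> nat set set set" where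
  "admissible_chains n k i = {C. C \<noteq> {} \<and> subset.chain (admissible_sets n k i) C \<and>
     (\<exists>B\<in>C. \<forall>j\<in>B. i \<le> j) \<and> (\<exists>A\<in>C. \<exists>j\<in>A. j < i)}"

lemma finite_family_of_subsets: "(\<And>X. X \<in> C \<Longrightarrow> X \<subseteq> {0..(n::nat)}) \<Longrightarrow> finite C"
  by (rule finite_subset[of C "Pow {0..n}"]) auto

lemma subset_between_diff_singleton: "S - {k} \<subseteq> T \<Longrightarrow> T \<subseteq> S \<Longrightarrow> T = S \<or> T = S - {k}"
  by blast

lemma Inter_in_cSd2:
  assumes "c \<in> cSd2 n k"
  shows "\<Inter>c \<in> c" "piSd c \<in> \<Inter>c" "\<Inter>c \<subseteq> {0..n}"
proof -
  have sets: "A \<noteq> {}" "A \<subseteq> {0..n}" if "A \<in> c" for A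
    using assms that by (simp_all add: cSd2_def)
  have "finite c"
    using sets(2) by (rule finite_family_of_subsets)
  then show "\<Inter>c \<in> c"
    using assms by (intro Inter_in_chain) (auto simp: cSd2_def subset_chain_def)
  then show "\<Inter>c \<subseteq> {0..n}" using sets(2) by blast
  then have "finite (\<Inter>c)" by (rule finite_subset) simp
  then show "piSd c \<in> \<Inter>c"
    unfolding piSd_def using sets(1)[OF \<open>\<Inter>c \<in> c\<close>] by (rule Min_in)
qed

lemma preimSd_subset_admissible_chains:
  "preimSd n k {i} \<inter> Vplus n k (preimSd n k {0..<i}) \<subseteq> admissible_chains n k i"
proof
  fix C assume "C \<in> preimSd n k {i} \<inter> Vplus n k (preimSd n k {0..<i})"
  then obtain c where C: "C \<in> cSd2 n k" "piSd C = i"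
    and c: "c \<in> cSd2 n k" "piSd c < i" "c \<subseteq> C"
    by (auto simp: preimSd_def Vplus_def)
  note bottom = Inter_in_cSd2[OF C(1)]
  have "finite (\<Inter>C)" using bottom(3) by (rule finite_subset) simp
  then have above_i: "\<forall>j\<in>\<Inter>C. i \<le> j"
    using C(2) Min_le unfolding piSd_def by blast
  have "i \<in> \<Inter>C" using bottom(2) C(2) by simp
  moreover have "\<Union>C \<subseteq> {0..n}" "\<Union>C \<noteq> {0..n}" "\<Union>C \<noteq> {0..n} - {k}"
    using C(1) by (auto simp: cSd2_def)
  ultimately have "C \<subseteq> admissible_sets n k i"
    using subset_between_diff_singleton[of "{0..n}" k "\<Union>C"] unfolding admissible_sets_def
    by blast
  moreover have "\<exists>A\<in>C. \<exists>j\<in>A. j < i"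
    using Inter_in_cSd2(1,2)[OF c(1)] c(2,3) by blast
  moreover have "C \<noteq> {}" "\<forall>A\<in>C. \<forall>B\<in>C. A \<subseteq> B \<or> B \<subseteq> A"
    using C(1) by (simp_all add: cSd2_def)
  ultimately show "C \<in> admissible_chains n k i"
    using bottom(1) above_i unfolding admissible_chains_def subset_chain_def by blast
qed

lemma admissible_chains_subset_preimSd:
  "admissible_chains n k i \<subseteq> preimSd n k {i} \<inter> Vplus n k (preimSd n k {0..<i})"
proof
  fix C assume "C \<in> admissible_chains n k i"
  then obtain B A j where C: "C \<noteq> {}" "C \<subseteq> admissible_sets n k i" "subset.chain UNIV C"
    and B: "B \<in> C" "\<forall>j\<in>B. i \<le> j" and A: "A \<in> C" "j \<in> A" "j < i"
    by (auto simp: admissible_chains_def subset_chain_def)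
  have sets: "X \<subseteq> {0..n}" "i \<in> X" "X \<noteq> {0..n}" "X \<noteq> {0..n} - {k}" if "X \<in> C" for X
    using that C(2) by (auto simp: admissible_sets_def)
  have "finite C"
    using sets(1) by (rule finite_family_of_subsets)
  then have "\<Union>C \<in> C"
    using C(1,3) by (rule Union_in_chain)
  then have "C \<in> cSd2 n k"
    unfolding cSd2_def mem_Collect_eq
  proof (intro conjI ballI)
    show "A \<noteq> {}" "A \<subseteq> {0..n}" if "A \<in> C" for A
      using sets(1,2)[OF that] by auto
    show "A \<subseteq> A' \<or> A' \<subseteq> A" if "A \<in> C" "A' \<in> C" for A A'
      using C(3) that by (simp add: subset_chain_def)
  qed (use C(1) sets(3,4)[OF \<open>\<Union>C \<in> C\<close>] in simp_all)
  moreover have "piSd C = i"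
  proof -
    have "\<Inter>C \<subseteq> B" "i \<in> \<Inter>C" using B(1) sets(2) by auto
    moreover have "finite (\<Inter>C)" using B(1) sets(1) by (meson Inter_lower finite_atLeastAtMost finite_subset)
    ultimately show ?thesis
      unfolding piSd_def by (intro Min_eqI) (use B(2) in blast)+
  qed
  moreover have "{A} \<in> preimSd n k {0..<i}"
  proof -
    have "finite A" using sets(1)[OF A(1)] by (rule finite_subset) simp
    then have "Min A < i" using A(2,3) Min_le le_less_trans by blast
    moreover have "A \<noteq> {}" using sets(2)[OF A(1)] by blast
    ultimately show ?thesis
      using sets[OF A(1)] unfolding preimSd_def cSd2_def piSd_def by simp
  qed
  ultimately show "C \<in> preimSd n k {i} \<inter> Vplus n k (preimSd n k {0..<i})"
    using A(1) unfolding preimSd_def Vplus_def by blast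
qed

lemma preimSd_inter_Vplus_eq:
  "preimSd n k {i} \<inter> Vplus n k (preimSd n k {0..<i}) = admissible_chains n k i"
  using preimSd_subset_admissible_chains admissible_chains_subset_preimSd by (rule equalityI)

lemma finite_admissible_set: "A \<in> admissible_sets n k i \<Longrightarrow> finite A"
  by (rule finite_subset[of _ "{0..n}"]) (simp_all add: admissible_sets_def)

definition admissible_map :: "nat \<Rightarrow> nat \<Rightarrow> nat \<Rightarrow> (nat set \<Rightarrow> nat set) \<Rightarrow> bool" where
  "admissible_map n k i f \<longleftrightarrow>
     f ` admissible_sets n k i \<subseteq> admissible_sets n k i \<and> mono_on (admissible_sets n k i) f \<and>
     (\<forall>A\<in>admissible_sets n k i. (\<forall>j\<in>A. i \<le> j) \<longrightarrow> (\<forall>j\<in>f A. i \<le> j)) \<and>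
     (\<forall>A\<in>admissible_sets n k i. (\<exists>j\<in>A. j < i) \<longrightarrow> (\<exists>j\<in>f A. j < i))"

lemma admissible_mapD:
  assumes "admissible_map n k i f" "A \<in> admissible_sets n k i"
  shows "f A \<in> admissible_sets n k i"
    and "\<forall>j\<in>A. i \<le> j \<Longrightarrow> \<forall>j\<in>f A. i \<le> j"
    and "\<exists>j\<in>A. j < i \<Longrightarrow> \<exists>j\<in>f A. j < i"
  using assms unfolding admissible_map_def image_subset_iff by simp_all

lemma admissible_map_on:
  assumes "admissible_map n k i f"
  shows "f ` admissible_sets n k i \<subseteq> admissible_sets n k i" "mono_on (admissible_sets n k i) f"
  using assms unfolding admissible_map_def by simp_all

lemma splice_admissible_chain:
  assumes f: "admissible_map n k i f" and g: "admissible_map n k i g"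
    and le: "\<And>A. A \<in> admissible_sets n k i \<Longrightarrow> f A \<subseteq> g A"
    and C: "C \<in> admissible_chains n k i" and ab: "b \<le> a" "a \<le> Suc b"
  shows "splice_image f g a b C \<in> admissible_chains n k i"
proof -
  let ?W = "admissible_sets n k i" and ?S = "splice_image f g a b C"
  obtain B A where chain: "subset.chain ?W C"
    and B: "B \<in> C" "\<forall>j\<in>B. i \<le> j" and A: "A \<in> C" "\<exists>j\<in>A. j < i"
    using C unfolding admissible_chains_def by blast
  have "B \<in> ?W" "A \<in> ?W" using chain A(1) B(1) unfolding subset_chain_def by blast+
  have "subset.chain ?W ?S"
    using admissible_map_on[OF f] admissible_map_on[OF g]
    by (intro splice_subset_chain[OF _ _ _ _ le finite_admissible_set chain ab])
  moreover have "\<exists>X\<in>?S. \<forall>j\<in>X. i \<le> j"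
    using admissible_mapD(2)[OF f \<open>B \<in> ?W\<close> B(2)] admissible_mapD(2)[OF g \<open>B \<in> ?W\<close> B(2)]
    by (cases rule: splice_member[OF B(1) ab(1), of f g]) blast+
  moreover have "\<exists>X\<in>?S. \<exists>j\<in>X. j < i"
    using admissible_mapD(3)[OF f \<open>A \<in> ?W\<close> A(2)] admissible_mapD(3)[OF g \<open>A \<in> ?W\<close> A(2)]
    by (cases rule: splice_member[OF A(1) ab(1), of f g]) blast+
  ultimately show ?thesis unfolding admissible_chains_def by blast
qed

lemma finite_admissible_chains: "finite (admissible_chains n k i)"
proof -
  have "admissible_chains n k i \<subseteq> Pow (Pow {0..n})"
    by (auto simp: admissible_chains_def admissible_sets_def subset_chain_def)
  then show ?thesis
    by (rule finite_subset) simp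
qed

lemma homotopic_admissible_maps:
  assumes "admissible_map n k i f" "admissible_map n k i g"
    and "\<And>A. A \<in> admissible_sets n k i \<Longrightarrow> f A \<subseteq> g A"
  shows "homotopic_with (\<lambda>_. True)
           (nerve_realization (admissible_chains n k i)) (nerve_realization (admissible_chains n k i))
           (nerve_map (admissible_chains n k i) (\<lambda>C. f ` C)) (nerve_map (admissible_chains n k i) (\<lambda>C. g ` C))"
proof (rule homotopic_nerve_maps_image[OF finite_admissible_chains])
  show "card A \<le> Suc n" if "C \<in> admissible_chains n k i" "A \<in> C" for C A
  proof -
    have "A \<subseteq> {0..n}"
      using that by (auto simp: admissible_chains_def admissible_sets_def subset_chain_def)
    then show ?thesis using card_mono[of "{0..n}" A] by simp
  qed
  show "splice_image f g a b C \<in> admissible_chains n k i"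
    if "C \<in> admissible_chains n k i" "b \<le> a" "a \<le> Suc b" for C a b
    using splice_admissible_chain[OF assms that] .
qed

section \<open>Contracting the poset\<close>

definition add_vertex :: "nat \<Rightarrow> nat \<Rightarrow> nat set \<Rightarrow> nat set" where
  "add_vertex k i A = (if \<exists>j\<in>A. j < i then insert k A else A)"

definition truncate_at :: "nat \<Rightarrow> nat \<Rightarrow> nat set \<Rightarrow> nat set" where
  "truncate_at k i A = (if \<exists>j\<in>A. j < i then insert k (A \<inter> {0..i}) else {i})"

definition collapse_to :: "nat set \<Rightarrow> nat \<Rightarrow> nat set \<Rightarrow> nat set" where
  "collapse_to Y i A = (if \<exists>j\<in>A. j < i then Y else {i})"

lemma singleton_admissible:
  assumes "2 \<le> n" "i \<le> n"
  shows "{i} \<in> admissible_sets n k i"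
proof -
  have "{i} \<noteq> {0..n} - {k}"
  proof
    assume "{i} = {0..n} - {k}"
    then have eq: "{0..n} - {k} = {i}" ..
    have "x = i" if "x \<le> n" "x \<noteq> k" for x
    proof -
      have "x \<in> {0..n} - {k}" using that by simp
      then show ?thesis unfolding eq by simp
    qed
    from this[of 0] this[of 1] this[of 2] assms(1) show False
      by (cases "k = 0"; cases "k = 1") simp_all
  qed
  moreover have "{i} \<noteq> {0..n}"
  proof
    assume "{i} = {0..n}"
    then have "0 \<in> {i}" "n \<in> {i}" by (metis atLeastAtMost_iff le0 order_refl)+
    then show False using assms(1) by simp
  qed
  ultimately show ?thesis using assms(2) by (simp add: admissible_sets_def)
qed

lemma pair_admissible:
  assumes "2 \<le> n" "k < i" "i \<le> n"
  shows "{k, i} \<in> admissible_sets n k i"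
proof -
  have "{k, i} \<noteq> {0..n}"
  proof
    assume eq: "{k, i} = {0..n}"
    have "0 \<in> {k, i}" "1 \<in> {k, i}" "2 \<in> {k, i}"
      unfolding eq using assms(1) by simp_all
    then show False by simp linarith
  qed
  moreover have "{k, i} \<noteq> {0..n} - {k}" by blast
  ultimately show ?thesis using assms by (simp add: admissible_sets_def)
qed

lemma insert_truncation_neq_interval:
  fixes n :: nat
  assumes "i < n" "\<not> (k = n \<and> i = n - 1)"
  shows "insert k (X \<inter> {0..i}) \<noteq> {0..n}"
proof
  assume eq: "insert k (X \<inter> {0..i}) = {0..n}"
  have "n \<in> insert k (X \<inter> {0..i})" "n - 1 \<in> insert k (X \<inter> {0..i})"
    unfolding eq by simp_all
  then show False using assms by simp linarith
qed

lemma insert_initial_admissible: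
  assumes "k \<le> n" "i \<le> k" "\<not> (k = n \<and> i \<in> {n - 1, n})"
  shows "insert k {0..i} \<in> admissible_sets n k i"
proof -
  have "i < n" using assms by auto
  then have "{0..n} \<inter> {0..i} = {0..i}" by auto
  moreover have "insert k ({0..n} \<inter> {0..i}) \<noteq> {0..n}"
    using assms(3) \<open>i < n\<close> by (intro insert_truncation_neq_interval) auto
  moreover have "insert k {0..i} \<noteq> {0..n} - {k}" by blast
  ultimately show ?thesis using assms(1,2) \<open>i < n\<close> by (simp add: admissible_sets_def)
qed

lemma admissible_map_id: "admissible_map n k i (\<lambda>A. A)"
  by (simp add: admissible_map_def mono_on_def)

lemma insert_admissible:
  assumes "k \<le> n" "A \<in> admissible_sets n k i"
  shows "insert k A \<in> admissible_sets n k i"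
proof -
  have A: "A \<subseteq> {0..n}" "i \<in> A" "A \<noteq> {0..n}" "A \<noteq> {0..n} - {k}"
    using assms(2) by (simp_all add: admissible_sets_def)
  have "insert k A \<noteq> {0..n}"
  proof
    assume "insert k A = {0..n}"
    then have "{0..n} - {k} \<subseteq> A" by blast
    then show False using subset_between_diff_singleton[OF _ A(1)] A(3,4) by blast
  qed
  moreover have "insert k A \<noteq> {0..n} - {k}" by blast
  ultimately show ?thesis using A(1,2) assms(1) by (simp add: admissible_sets_def)
qed

lemma admissible_map_add_vertex:
  assumes "k \<le> n"
  shows "admissible_map n k i (add_vertex k i)"
  unfolding admissible_map_def
proof (intro conjI ballI impI)
  show "add_vertex k i ` admissible_sets n k i \<subseteq> admissible_sets n k i"
    using insert_admissible[OF assms] by (auto simp: add_vertex_def)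
  show "mono_on (admissible_sets n k i) (add_vertex k i)"
    unfolding mono_on_def add_vertex_def by auto
qed (fastforce simp: add_vertex_def split: if_splits)+

lemma truncation_admissible:
  assumes "k \<le> n" "i \<le> n" "\<not> (k = n \<and> i \<in> {n - 1, n})" "A \<in> admissible_sets n k i"
  shows "insert k (A \<inter> {0..i}) \<in> admissible_sets n k i"
proof -
  have A: "A \<subseteq> {0..n}" "i \<in> A"
    using assms(4) by (simp_all add: admissible_sets_def)
  have "insert k (A \<inter> {0..i}) \<noteq> {0..n}"
  proof (cases "i < n")
    case True
    then show ?thesis using assms(3) by (intro insert_truncation_neq_interval) auto
  next
    case False
    then have "A \<inter> {0..i} = A" using A(1) by auto
    then show ?thesis
      using insert_admissible[OF assms(1,4)] by (simp add: admissible_sets_def)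
  qed
  moreover have "insert k (A \<inter> {0..i}) \<noteq> {0..n} - {k}" by blast
  moreover have "insert k (A \<inter> {0..i}) \<subseteq> {0..n}" using A(1) assms(1) by auto
  ultimately show ?thesis using A(2) by (simp add: admissible_sets_def)
qed

lemma admissible_map_truncate_at:
  assumes "2 \<le> n" "k \<le> n" "i \<le> n" "\<not> (k = n \<and> i \<in> {n - 1, n})"
  shows "admissible_map n k i (truncate_at k i)"
  unfolding admissible_map_def
proof (intro conjI ballI impI)
  show "truncate_at k i ` admissible_sets n k i \<subseteq> admissible_sets n k i"
    using truncation_admissible[OF assms(2-4)] singleton_admissible[OF assms(1,3)]
    by (auto simp: truncate_at_def)
  show "mono_on (admissible_sets n k i) (truncate_at k i)"
    unfolding mono_on_def truncate_at_def admissible_sets_def by auto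
qed (fastforce simp: truncate_at_def split: if_splits)+

lemma admissible_map_collapse_to:
  assumes "Y \<in> admissible_sets n k i" "{i} \<in> admissible_sets n k i" "\<exists>j\<in>Y. j < i"
  shows "admissible_map n k i (collapse_to Y i)"
  unfolding admissible_map_def
proof (intro conjI ballI impI)
  show "collapse_to Y i ` admissible_sets n k i \<subseteq> admissible_sets n k i"
    using assms(1,2) by (auto simp: collapse_to_def)
  have "i \<in> Y" using assms(1) by (simp add: admissible_sets_def)
  then show "mono_on (admissible_sets n k i) (collapse_to Y i)"
    unfolding mono_on_def collapse_to_def by auto
qed (use assms(3) in \<open>fastforce simp: collapse_to_def split: if_splits\<close>)+

lemma collapse_to_image:
  assumes "C \<in> admissible_chains n k i"
  shows "collapse_to Y i ` C = {{i}, Y}"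
proof -
  obtain B A where "B \<in> C" "\<forall>j\<in>B. i \<le> j" "A \<in> C" "\<exists>j\<in>A. j < i"
    using assms unfolding admissible_chains_def by blast
  then have "{i} \<in> collapse_to Y i ` C" "Y \<in> collapse_to Y i ` C"
    by (auto simp: collapse_to_def intro!: image_eqI)
  moreover have "collapse_to Y i ` C \<subseteq> {{i}, Y}"
    by (auto simp: collapse_to_def)
  ultimately show ?thesis by blast
qed

lemma truncate_at_subset_add_vertex: "i \<in> A \<Longrightarrow> truncate_at k i A \<subseteq> add_vertex k i A"
  by (auto simp: truncate_at_def add_vertex_def)

lemma collapse_to_pair_subset_truncate_at: "i \<in> A \<Longrightarrow> collapse_to {k, i} i A \<subseteq> truncate_at k i A"
  by (auto simp: truncate_at_def collapse_to_def)

lemma truncate_at_subset_collapse_to: "truncate_at k i A \<subseteq> collapse_to (insert k {0..i}) i A"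
  by (auto simp: truncate_at_def collapse_to_def)

lemma homotopic_identity_collapse_to:
  assumes "2 \<le> n" "k \<le> n" "1 \<le> i" "i \<le> n" "\<not> (k = n \<and> i \<in> {n - 1, n})"
  obtains Y where "Y \<in> admissible_sets n k i" "\<exists>j\<in>Y. j < i"
    "homotopic_with (\<lambda>_. True)
       (nerve_realization (admissible_chains n k i)) (nerve_realization (admissible_chains n k i))
       (nerve_map (admissible_chains n k i) (\<lambda>C. C))
       (nerve_map (admissible_chains n k i) (\<lambda>C. collapse_to Y i ` C))"
proof -
  let ?P = "admissible_chains n k i"
  let ?h = "\<lambda>f g. homotopic_with (\<lambda>_. True) (nerve_realization ?P) (nerve_realization ?P)
                    (nerve_map ?P (\<lambda>C. f ` C)) (nerve_map ?P (\<lambda>C. g ` C))"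
  note truncate = admissible_map_truncate_at[OF assms(1,2,4,5)]
  note singleton = singleton_admissible[OF assms(1,4)]
  have "?h (\<lambda>A. A) (add_vertex k i)"
    by (rule homotopic_admissible_maps[OF admissible_map_id admissible_map_add_vertex[OF assms(2)]])
       (auto simp: add_vertex_def)
  moreover have "?h (truncate_at k i) (add_vertex k i)"
    by (rule homotopic_admissible_maps[OF truncate admissible_map_add_vertex[OF assms(2)]])
       (simp add: truncate_at_subset_add_vertex admissible_sets_def)
  ultimately have id_truncate: "?h (\<lambda>A. A) (truncate_at k i)"
    using homotopic_with_trans homotopic_with_symD by blast
  show thesis
  proof (cases "k < i")
    case True
    have Y: "{k, i} \<in> admissible_sets n k i" "\<exists>j\<in>{k, i}. j < i"
      using pair_admissible[OF assms(1) True assms(4)] True by simp_all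
    have "?h (collapse_to {k, i} i) (truncate_at k i)"
      by (rule homotopic_admissible_maps[OF admissible_map_collapse_to[OF Y(1) singleton Y(2)] truncate])
         (simp add: collapse_to_pair_subset_truncate_at admissible_sets_def)
    with id_truncate have "?h (\<lambda>A. A) (collapse_to {k, i} i)"
      using homotopic_with_trans homotopic_with_symD by blast
    then show thesis by (intro that[OF Y]) simp
  next
    case False
    have "insert k {0..i} \<in> admissible_sets n k i"
      using insert_initial_admissible[OF assms(2) _ assms(5)] False by simp
    moreover have "\<exists>j\<in>insert k {0..i}. j < i"
      using assms(3) by (intro bexI[of _ 0]) auto
    ultimately have Y: "insert k {0..i} \<in> admissible_sets n k i" "\<exists>j\<in>insert k {0..i}. j < i"
      by blast+
    have "?h (truncate_at k i) (collapse_to (insert k {0..i}) i)"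
      by (rule homotopic_admissible_maps[OF truncate admissible_map_collapse_to[OF Y(1) singleton Y(2)]])
         (rule truncate_at_subset_collapse_to)
    with id_truncate have "?h (\<lambda>A. A) (collapse_to (insert k {0..i}) i)"
      using homotopic_with_trans by blast
    then show thesis by (intro that[OF Y]) simp
  qed
qed

theorem lemma6p4:
  fixes n k i :: nat
  assumes "2 \<le> n" and "k \<le> n" and "1 \<le> i" and "i \<le> n"
    and "\<not> (k = n \<and> i \<in> {n - 1, n})"
  shows "weakly_contractible
           (nerve_realization (preimSd n k {i} \<inter> Vplus n k (preimSd n k {0..<i})))"
proof -
  let ?P = "admissible_chains n k i"
  obtain Y where Y: "Y \<in> admissible_sets n k i" "\<exists>j\<in>Y. j < i"
    and homotopic: "homotopic_with (\<lambda>_. True) (nerve_realization ?P) (nerve_realization ?P)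
                      (nerve_map ?P (\<lambda>C. C)) (nerve_map ?P (\<lambda>C. collapse_to Y i ` C))"
    using homotopic_identity_collapse_to[OF assms] by blast
  have "{{i}, Y} \<in> ?P"
  proof -
    have "{i} \<in> admissible_sets n k i" "i \<in> Y"
      using singleton_admissible[OF assms(1,4)] Y(1) by (simp_all add: admissible_sets_def)
    then show ?thesis
      using Y unfolding admissible_chains_def subset_chain_def by auto
  qed
  moreover have "nerve_map ?P (\<lambda>C. collapse_to Y i ` C) = nerve_map ?P (\<lambda>_. {{i}, Y})"
    by (rule nerve_map_cong) (rule collapse_to_image)
  ultimately have "weakly_contractible (nerve_realization ?P)"
    using weakly_contractible_nerve_realization[OF finite_admissible_chains] homotopic by metis
  then show ?thesis by (simp only: preimSd_inter_Vplus_eq)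
qed

end
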